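(* Let $n\ge1$, $\mathcal{I}=\mathbb{Z}_{\ge1}$, $\Gamma_l=\{x\in\mathbb{Z}^n_{\ge0}\mid\sum_{i=1}^nx_i=l\}$ for $l\in\mathcal{I}$, and let $\pi_l$ be probability distributions on $\Gamma_l$ strictly positive on every element. Suppose: (a) whenever $x,x+e_j-e_k\in\Gamma_i$ and $y,y+e_j-e_k\in\Gamma_{i+1}$ ($i\in\mathcal{I}$) with $x_j=y_j$, $x_k=y_k$, we have $\frac{\pi_i(x+e_j-e_k)}{\pi_i(x)}=\frac{\pi_{i+1}(y+e_j-e_k)}{\pi_{i+1}(y)}$; (b) for each $i\in\mathcal{I}$ there is a constant $a_i$ depending only on $i$ such that whenever $x\in\Gamma_i$, $x+e_j,y\in\Gamma_{i+1}$, $y+e_j\in\Gamma_{i+2}$ with $x_j=y_j$, we have $\frac{\pi_{i+1}(x+e_j)}{\pi_i(x)}=a_i\frac{\pi_{i+2}(y+e_j)}{\pi_{i+1}(y)}$. Then the family $(\Gamma_l,\pi_l)_{l\in\mathcal{I}}$ has product-form distribution: there exist $f_i:\mathbb{Z}_{\ge0}\to\mathbb{R}_{>0}$, $i=1,\dots,n$, with $\pi_l(x)=Z_l^{-1}\prod_{i=1}^nf_i(x_i)$ for all $l\in\mathcal{I}$ and $x\in\Gamma_l$, where $Z_l=\sum_{x\in\Gamma_l}\prod_if_i(x_i)$.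
   Context: $e_j$ denotes the $j$-th standard basis vector of $\mathbb{Z}^n$. *)

theory Defs
  imports Complex_Main "HOL-Library.Function_Algebras"
begin

text \<open>Vectors in Z^n are modelled as functions nat => int, with coordinates
  0..n-1 (standing for 1..n) and value 0 outside.\<close>

definition unitv :: "nat \<Rightarrow> nat \<Rightarrow> int" where
  "unitv j = (\<lambda>i. if i = j then 1 else 0)"

definition Gamma :: "nat \<Rightarrow> nat \<Rightarrow> (nat \<Rightarrow> int) set" where
  "Gamma n l = {x. (\<forall>i<n. 0 \<le> x i) \<and> (\<forall>i\<ge>n. x i = 0) \<and> (\<Sum>i<n. x i) = int l}"

end

theory Submission
  imports Defs
begin

text \<open>Write U_l(x, j) = pi_(l+1)(x + e_j) / pi_l(x). Dividing by the growth ratio beta_l at a fixed point of level l removes the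
  factor a_l, so the normalised ratio is the same at consecutive levels and, going up one level and
  back down (possible as n \<ge> 2), at any two points of one level with equal j-th coordinate. Hence
  U_l(x, j) = beta_l alpha_j(x_j), and induction on l gives pi_l(x) = C_l prod_j f_j(x_j) with
  f_j(m) = prod_(t<m) alpha_j(t); at level 1 the constant does not depend on j because e_j + e_k is
  reached both from e_j and from e_k. Summing over Gamma_l forces C_l = 1/Z_l. For n = 1 every Gamma_l is a singleton.\<close>

lemma sum_unitv: "j < n \<Longrightarrow> (\<Sum>i<n. unitv j i) = 1"
  unfolding unitv_def by (simp add: sum.delta)

lemma Gamma_add_unitv:
  assumes "x \<in> Gamma n l" "j < n"
  shows "x + unitv j \<in> Gamma n (Suc l)"
proof -
  have "(\<Sum>i<n. (x + unitv j) i) = (\<Sum>i<n. x i) + 1"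
    using sum_unitv[OF assms(2)] by (simp add: sum.distrib)
  with assms show ?thesis
    unfolding Gamma_def by (auto simp: unitv_def)
qed

lemma Gamma_SucE:
  assumes "z \<in> Gamma n (Suc l)"
  obtains j where "j < n" "z - unitv j \<in> Gamma n l"
proof -
  have "\<exists>j<n. z j \<noteq> 0"
  proof (rule ccontr)
    assume "\<not> ?thesis"
    then have "(\<Sum>i<n. z i) = 0" by simp
    with assms show False by (simp add: Gamma_def)
  qed
  then obtain j where j: "j < n" "z j \<noteq> 0" by blast
  have "(\<Sum>i<n. (z - unitv j) i) = (\<Sum>i<n. z i) - 1"
    using sum_unitv[OF j(1)] by (simp add: sum_subtractf)
  with assms j have "z - unitv j \<in> Gamma n l"
    unfolding Gamma_def by (auto simp: unitv_def)
  with j(1) show thesis by (rule that)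
qed

lemma Gamma_0: "Gamma n 0 = {0}"
proof safe
  fix x assume x: "x \<in> Gamma n 0"
  then have "\<forall>i\<in>{..<n}. x i = 0"
    using sum_nonneg_eq_0_iff[of "{..<n}" x] by (simp add: Gamma_def)
  with x show "x = 0"
    by (auto simp: Gamma_def fun_eq_iff not_less[symmetric])
qed (simp add: Gamma_def)

lemma Gamma_1E:
  assumes "x \<in> Gamma n 1"
  obtains j where "j < n" "x = unitv j"
proof -
  from assms obtain j where "j < n" "x - unitv j \<in> Gamma n 0"
    using Gamma_SucE[of x n 0] by auto
  with that show thesis by (simp add: Gamma_0)
qed

definition axis :: "nat \<Rightarrow> nat \<Rightarrow> nat \<Rightarrow> int" where
  "axis j m = (\<lambda>i. if i = j then int m else 0)"

lemma axis_Gamma: "j < n \<Longrightarrow> axis j m \<in> Gamma n m"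
  unfolding Gamma_def axis_def by (simp add: sum.delta)

lemma unitv_Gamma: "j < n \<Longrightarrow> unitv j \<in> Gamma n 1"
  using Gamma_add_unitv[of 0 n 0 j] by (simp add: Gamma_0)

lemma Gamma_one_dim: "Gamma 1 l = {axis 0 l}"
proof safe
  fix x assume "x \<in> Gamma 1 l"
  then show "x = axis 0 l"
    by (auto simp: Gamma_def axis_def fun_eq_iff)
qed (simp add: axis_Gamma)

lemma prod_weight_add_unitv:
  fixes g :: "nat \<Rightarrow> nat \<Rightarrow> 'a :: comm_monoid_mult"
  assumes "\<forall>i<n. 0 \<le> x i" "j < n"
  shows "(\<Prod>i<n. \<Prod>t<nat ((x + unitv j) i). g i t)
    = (\<Prod>i<n. \<Prod>t<nat (x i). g i t) * g j (nat (x j))"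
proof -
  have "(\<Prod>i<n. \<Prod>t<nat ((x + unitv j) i). g i t)
      = (\<Prod>i<n. (\<Prod>t<nat (x i). g i t) * (if i = j then g j (nat (x j)) else 1))"
    using assms(1) by (intro prod.cong) (auto simp: unitv_def nat_add_distrib)
  also have "\<dots> = (\<Prod>i<n. \<Prod>t<nat (x i). g i t) * g j (nat (x j))"
    using assms(2) by (simp add: prod.distrib prod.delta)
  finally show ?thesis .
qed

definition scaled_product_form ::
    "nat \<Rightarrow> (nat \<Rightarrow> (nat \<Rightarrow> int) \<Rightarrow> real) \<Rightarrow> (nat \<Rightarrow> nat \<Rightarrow> real) \<Rightarrow> bool" where
  "scaled_product_form n \<pi> f \<longleftrightarrow>
     (\<forall>l\<ge>1. \<exists>C. \<forall>x\<in>Gamma n l. \<pi> l x = C * (\<Prod>i<n. f i (nat (x i))))"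

lemma scaled_product_form_normalize:
  assumes "scaled_product_form n \<pi> f"
    and prob: "(\<Sum>x\<in>Gamma n l. \<pi> l x) = 1" and "l \<ge> 1" "x \<in> Gamma n l"
  shows "\<pi> l x = (\<Prod>i<n. f i (nat (x i))) / (\<Sum>y\<in>Gamma n l. \<Prod>i<n. f i (nat (y i)))"
proof -
  let ?Z = "\<Sum>y\<in>Gamma n l. \<Prod>i<n. f i (nat (y i))"
  obtain C where C: "\<And>y. y \<in> Gamma n l \<Longrightarrow> \<pi> l y = C * (\<Prod>i<n. f i (nat (y i)))"
    using assms(1,3) unfolding scaled_product_form_def by blast
  have "1 = (\<Sum>y\<in>Gamma n l. C * (\<Prod>i<n. f i (nat (y i))))"
    unfolding prob[symmetric] by (rule sum.cong) (simp_all add: C)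
  also have "\<dots> = C * ?Z"
    by (rule sum_distrib_left[symmetric])
  finally have "C * ?Z = 1" ..
  then have "C = 1 / ?Z"
    by (metis eq_divide_eq mult_not_zero zero_neq_one)
  then show ?thesis
    using C[OF assms(4)] by simp
qed

lemma scaled_product_form_one_dim: "scaled_product_form 1 \<pi> (\<lambda>_ _. 1)"
  unfolding scaled_product_form_def Gamma_one_dim by simp

definition growth_ratio ::
    "(nat \<Rightarrow> (nat \<Rightarrow> int) \<Rightarrow> real) \<Rightarrow> nat \<Rightarrow> (nat \<Rightarrow> int) \<Rightarrow> nat \<Rightarrow> real" where
  "growth_ratio \<pi> l x j = \<pi> (Suc l) (x + unitv j) / \<pi> l x"

locale scaled_growth_ratios =
  fixes n :: nat and \<pi> :: "nat \<Rightarrow> (nat \<Rightarrow> int) \<Rightarrow> real" and a :: "nat \<Rightarrow> real"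
  assumes two_le_n: "2 \<le> n"
    and pos: "\<And>l x. l \<ge> 1 \<Longrightarrow> x \<in> Gamma n l \<Longrightarrow> \<pi> l x > 0"
    and growth_ratio_shift: "\<And>l x y j. l \<ge> 1 \<Longrightarrow> x \<in> Gamma n l \<Longrightarrow> y \<in> Gamma n (Suc l) \<Longrightarrow>
      j < n \<Longrightarrow> x j = y j \<Longrightarrow> growth_ratio \<pi> l x j = a l * growth_ratio \<pi> (Suc l) y j"
begin

lemma growth_ratio_pos: "l \<ge> 1 \<Longrightarrow> x \<in> Gamma n l \<Longrightarrow> j < n \<Longrightarrow> growth_ratio \<pi> l x j > 0"
  unfolding growth_ratio_def by (simp add: pos Gamma_add_unitv)

definition other :: "nat \<Rightarrow> nat" where
  "other j = (if j = 0 then 1 else 0)"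

lemma add_unitv_other:
  assumes "x \<in> Gamma n l"
  shows "x + unitv (other j) \<in> Gamma n (Suc l)" "(x + unitv (other j)) j = x j"
proof -
  have "other j < n" "other j \<noteq> j"
    using two_le_n by (auto simp: other_def)
  then show "x + unitv (other j) \<in> Gamma n (Suc l)" "(x + unitv (other j)) j = x j"
    using assms by (simp_all add: Gamma_add_unitv) (simp add: unitv_def)
qed

definition level_scale :: "nat \<Rightarrow> real" where
  "level_scale l = growth_ratio \<pi> l (axis 1 l) 0"

lemma level_scale_pos: "l \<ge> 1 \<Longrightarrow> level_scale l > 0"
  unfolding level_scale_def using two_le_n by (simp add: growth_ratio_pos axis_Gamma)

lemma level_scale_shift: "l \<ge> 1 \<Longrightarrow> level_scale l = a l * level_scale (Suc l)"
  unfolding level_scale_def using two_le_n axis_Gamma[of 1 n]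
  by (intro growth_ratio_shift) (auto simp: axis_def)

definition normalized_ratio :: "nat \<Rightarrow> (nat \<Rightarrow> int) \<Rightarrow> nat \<Rightarrow> real" where
  "normalized_ratio l x j = growth_ratio \<pi> l x j / level_scale l"

lemma normalized_ratio_shift:
  assumes "l \<ge> 1" "x \<in> Gamma n l" "y \<in> Gamma n (Suc l)" "j < n" "x j = y j"
  shows "normalized_ratio l x j = normalized_ratio (Suc l) y j"
proof -
  have "a l \<noteq> 0"
    using level_scale_shift[OF assms(1)] level_scale_pos[OF assms(1)] by auto
  then show ?thesis
    unfolding normalized_ratio_def growth_ratio_shift[OF assms] level_scale_shift[OF assms(1)]
    by simp
qed

lemma normalized_ratio_same_level:
  assumes "l \<ge> 1" "x \<in> Gamma n l" "y \<in> Gamma n l" "j < n" "x j = y j"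
  shows "normalized_ratio l x j = normalized_ratio l y j"
proof -
  let ?z = "x + unitv (other j)"
  have z: "?z \<in> Gamma n (Suc l)" "?z j = x j"
    using add_unitv_other[OF assms(2)] by auto
  have "normalized_ratio l x j = normalized_ratio (Suc l) ?z j"
    using assms z by (intro normalized_ratio_shift) auto
  also have "\<dots> = normalized_ratio l y j"
    using assms z by (intro normalized_ratio_shift[symmetric]) auto
  finally show ?thesis .
qed

lemma normalized_ratio_up:
  assumes "l \<ge> 1" "x \<in> Gamma n l" "y \<in> Gamma n (l + d)" "j < n" "x j = y j"
  shows "normalized_ratio l x j = normalized_ratio (l + d) y j"
  using assms
proof (induction d arbitrary: l x)
  case 0
  then show ?case
    using normalized_ratio_same_level[of l x y j] by simp
next
  case (Suc d)
  define z where "z = x + unitv (other j)"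
  have z: "z \<in> Gamma n (Suc l)" "z j = x j"
    unfolding z_def using add_unitv_other[OF Suc.prems(2)] by auto
  have "normalized_ratio l x j = normalized_ratio (Suc l) z j"
    using Suc.prems z by (intro normalized_ratio_shift) auto
  also have "\<dots> = normalized_ratio (Suc l + d) y j"
    by (rule Suc.IH) (use Suc.prems z in auto)
  finally show ?case by simp
qed

lemma normalized_ratio_level_indep:
  assumes "l \<ge> 1" "l' \<ge> 1" "x \<in> Gamma n l" "y \<in> Gamma n l'" "j < n" "x j = y j"
  shows "normalized_ratio l x j = normalized_ratio l' y j"
proof (cases "l \<le> l'")
  case True
  then show ?thesis
    using normalized_ratio_up[where d = "l' - l"] assms by simp
next
  case False
  then show ?thesis
    using normalized_ratio_up[where l = l' and x = y and y = x and d = "l - l'"] assms by simp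
qed

definition coord_factor :: "nat \<Rightarrow> nat \<Rightarrow> real" where
  "coord_factor j m = normalized_ratio (Suc m) (axis j m + unitv (other j)) j"

lemma coord_factor_pos: "j < n \<Longrightarrow> coord_factor j m > 0"
  unfolding coord_factor_def normalized_ratio_def
  by (simp add: growth_ratio_pos level_scale_pos add_unitv_other axis_Gamma)

lemma normalized_ratio_eq_coord_factor:
  assumes "l \<ge> 1" "x \<in> Gamma n l" "j < n"
  shows "normalized_ratio l x j = coord_factor j (nat (x j))"
proof -
  let ?w = "axis j (nat (x j)) + unitv (other j)"
  have "?w \<in> Gamma n (Suc (nat (x j)))" "?w j = x j"
    using add_unitv_other[OF axis_Gamma[OF assms(3)]] assms(2,3)
    by (auto simp: axis_def Gamma_def)
  then show ?thesis
    unfolding coord_factor_def using assms by (intro normalized_ratio_level_indep) auto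
qed

lemma \<pi>_add_unitv:
  assumes "l \<ge> 1" "x \<in> Gamma n l" "j < n"
  shows "\<pi> (Suc l) (x + unitv j) = \<pi> l x * level_scale l * coord_factor j (nat (x j))"
  using normalized_ratio_eq_coord_factor[OF assms] pos[OF assms(1,2)] level_scale_pos[OF assms(1)]
  unfolding normalized_ratio_def growth_ratio_def by (simp add: field_simps)

lemma level_one_balance:
  assumes "j < n" "k < n"
  shows "\<pi> 1 (unitv j) * coord_factor k 0 = \<pi> 1 (unitv k) * coord_factor j 0"
proof (cases "j = k")
  case False
  then have "unitv j k = 0" "unitv k j = 0" by (auto simp: unitv_def)
  have "\<pi> 2 (unitv j + unitv k) = \<pi> 1 (unitv j) * level_scale 1 * coord_factor k 0"
    using \<pi>_add_unitv[OF _ unitv_Gamma[OF assms(1)] assms(2)] \<open>unitv j k = 0\<close>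
    by (simp add: numeral_2_eq_2)
  also have "unitv j + unitv k = unitv k + unitv j" by (rule add.commute)
  also have "\<pi> 2 \<dots> = \<pi> 1 (unitv k) * level_scale 1 * coord_factor j 0"
    using \<pi>_add_unitv[OF _ unitv_Gamma[OF assms(2)] assms(1)] \<open>unitv k j = 0\<close>
    by (simp add: numeral_2_eq_2)
  finally show ?thesis using level_scale_pos[of 1] by simp
qed simp

lemma scaled_product_form: "scaled_product_form n \<pi> (\<lambda>j m. \<Prod>t<m. coord_factor j t)"
  unfolding scaled_product_form_def
proof (intro allI impI)
  fix l :: nat assume "l \<ge> 1"
  then show "\<exists>C. \<forall>x\<in>Gamma n l. \<pi> l x = C * (\<Prod>i<n. \<Prod>t<nat (x i). coord_factor i t)"
  proof (induction l rule: dec_induct)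
    case base
    have "\<pi> 1 x = \<pi> 1 (unitv 0) / coord_factor 0 0 * (\<Prod>i<n. \<Prod>t<nat (x i). coord_factor i t)"
      if x: "x \<in> Gamma n 1" for x
    proof -
      obtain j where j: "j < n" "x = unitv j"
        using x by (rule Gamma_1E)
      have "(\<Prod>i<n. \<Prod>t<nat (unitv j i). coord_factor i t) = coord_factor j 0"
        using prod_weight_add_unitv[of n 0 j coord_factor] j(1) by simp
      with j show ?thesis
        using level_one_balance[of j 0] coord_factor_pos[of 0 0] two_le_n by (simp add: field_simps)
    qed
    then show ?case by blast
  next
    case (step l)
    then obtain C where C: "\<forall>x\<in>Gamma n l. \<pi> l x = C * (\<Prod>i<n. \<Prod>t<nat (x i). coord_factor i t)"
      by blast
    have "\<pi> (Suc l) z = C * level_scale l * (\<Prod>i<n. \<Prod>t<nat (z i). coord_factor i t)"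
      if z: "z \<in> Gamma n (Suc l)" for z
    proof -
      obtain j where j: "j < n" "z - unitv j \<in> Gamma n l"
        using z by (rule Gamma_SucE)
      then have "\<forall>i<n. 0 \<le> (z - unitv j) i" by (simp add: Gamma_def)
      then show ?thesis
        using \<pi>_add_unitv[OF step(1) j(2) j(1)] C j prod_weight_add_unitv[of n "z - unitv j" j coord_factor]
        by simp
    qed
    then show ?case by blast
  qed
qed

end

lemma scaled_growth_ratiosI:
  fixes \<pi> :: "nat \<Rightarrow> (nat \<Rightarrow> int) \<Rightarrow> real" and a :: "nat \<Rightarrow> real"
  assumes "2 \<le> n"
    and "\<And>l x. l \<ge> 1 \<Longrightarrow> x \<in> Gamma n l \<Longrightarrow> \<pi> l x > 0"
    and a: "\<forall>i\<ge>1. \<forall>x y j.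
        x \<in> Gamma n i \<longrightarrow> x + unitv j \<in> Gamma n (i + 1) \<longrightarrow>
        y \<in> Gamma n (i + 1) \<longrightarrow> y + unitv j \<in> Gamma n (i + 2) \<longrightarrow>
        x j = y j \<longrightarrow>
        \<pi> (i + 1) (x + unitv j) / \<pi> i x = a i * (\<pi> (i + 2) (y + unitv j) / \<pi> (i + 1) y)"
  shows "scaled_growth_ratios n \<pi> a"
proof
  show "growth_ratio \<pi> l x j = a l * growth_ratio \<pi> (Suc l) y j"
    if "l \<ge> 1" "x \<in> Gamma n l" "y \<in> Gamma n (Suc l)" "j < n" "x j = y j" for l x y j
    using a that Gamma_add_unitv[OF that(2,4)] Gamma_add_unitv[OF that(3,4)]
    unfolding growth_ratio_def by simp
qed (fact assms(1), fact assms(2))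

theorem proposition6p5:
  fixes n :: nat and \<pi> :: "nat \<Rightarrow> (nat \<Rightarrow> int) \<Rightarrow> real"
  assumes n_pos: "n \<ge> 1"
    and pos: "\<And>l x. l \<ge> 1 \<Longrightarrow> x \<in> Gamma n l \<Longrightarrow> \<pi> l x > 0"
    and prob: "\<And>l. l \<ge> 1 \<Longrightarrow> (\<Sum>x\<in>Gamma n l. \<pi> l x) = 1"
    and cond_a: "\<And>i x y j k. i \<ge> 1 \<Longrightarrow>
        x \<in> Gamma n i \<Longrightarrow> x + unitv j - unitv k \<in> Gamma n i \<Longrightarrow>
        y \<in> Gamma n (i + 1) \<Longrightarrow> y + unitv j - unitv k \<in> Gamma n (i + 1) \<Longrightarrow>
        x j = y j \<Longrightarrow> x k = y k \<Longrightarrow>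
        \<pi> i (x + unitv j - unitv k) / \<pi> i x
          = \<pi> (i + 1) (y + unitv j - unitv k) / \<pi> (i + 1) y"
    and cond_b: "\<exists>a :: nat \<Rightarrow> real. \<forall>i\<ge>1. \<forall>x y j.
        x \<in> Gamma n i \<longrightarrow> x + unitv j \<in> Gamma n (i + 1) \<longrightarrow>
        y \<in> Gamma n (i + 1) \<longrightarrow> y + unitv j \<in> Gamma n (i + 2) \<longrightarrow>
        x j = y j \<longrightarrow>
        \<pi> (i + 1) (x + unitv j) / \<pi> i x = a i * (\<pi> (i + 2) (y + unitv j) / \<pi> (i + 1) y)"
  shows "\<exists>f :: nat \<Rightarrow> nat \<Rightarrow> real. (\<forall>i<n. \<forall>m. f i m > 0) \<and>
     (\<forall>l\<ge>1. \<forall>x\<in>Gamma n l.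
        \<pi> l x = (\<Prod>i<n. f i (nat (x i))) / (\<Sum>y\<in>Gamma n l. \<Prod>i<n. f i (nat (y i))))"
proof -
  obtain f where f_pos: "\<forall>i<n. \<forall>m. f i m > 0" and f: "scaled_product_form n \<pi> f"
  proof (cases "n = 1")
    case True
    then show thesis
      using that[of "\<lambda>_ _. 1"] scaled_product_form_one_dim by simp
  next
    case False
    with n_pos have "2 \<le> n" by simp
    then obtain a where "scaled_growth_ratios n \<pi> a"
      using cond_b scaled_growth_ratiosI[where \<pi> = \<pi>, OF \<open>2 \<le> n\<close> pos] by blast
    then interpret scaled_growth_ratios n \<pi> a .
    show thesis
      by (rule that[OF _ scaled_product_form]) (simp add: coord_factor_pos prod_pos)
  qed
  have "\<forall>l\<ge>1. \<forall>x\<in>Gamma n l.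
      \<pi> l x = (\<Prod>i<n. f i (nat (x i))) / (\<Sum>y\<in>Gamma n l. \<Prod>i<n. f i (nat (y i)))"
    using scaled_product_form_normalize[OF f prob] by blast
  with f_pos show ?thesis by blast
qed

end
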